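(* Let $G$ be a real $n\times m$ matrix and $\mathbf v\in\mathbb R^n$, and let $\mathcal G=\{x\in\mathbb R^m: Gx\le \mathbf v\}$, with the inequality understood componentwise. Let $P$ be the nonnegative orthant of $\mathbb R^n$ and $F=\mathcal R(G)$ the range of $G$. Write $\mathbf v=\mathbf v_F+\upsilon$, where $\mathbf v_F$ is the orthogonal projection of $\mathbf v$ onto $F$ and $\upsilon$ is the orthogonal projection of $\mathbf v$ onto $F^\perp$. Assume that $\upsilon\neq 0$ and that $F\cap P=\{0\}$ (strict tangency). Let $C_e=\{t\upsilon+z: t\ge 0,\ z\in F\}$. Then $$\mathcal G\neq\emptyset \iff C_e\cap P\neq\{0\},$$ or, equivalently, $\mathcal G=\emptyset\iff C_e\cap P=\{0\}$.
   Context: The condition $F\cap P=\{0\}$ says that the subspace $\mathcal R(G)$ meets the nonnegative orthant only at the origin; the paper calls this strict tangency. $C_e$ is the convex cone generated by the affine set $\upsilon+F$. *)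

theory Defs
  imports "HOL-Analysis.Analysis"
begin

definition nonneg_orthant :: "(real ^ 'n) set" where
  "nonneg_orthant = {y. \<forall>i. 0 \<le> y $ i}"

definition feasible_set :: "real ^ 'm ^ 'n \<Rightarrow> real ^ 'n \<Rightarrow> (real ^ 'm) set" where
  "feasible_set G v = {x. \<forall>i. (G *v x) $ i \<le> v $ i}"

definition cone_e :: "real ^ 'n \<Rightarrow> (real ^ 'n) set \<Rightarrow> (real ^ 'n) set" where
  "cone_e u F = {t *\<^sub>R u + z | t z. 0 \<le> t \<and> z \<in> F}"

end

theory Submission
  imports Defs
begin

text \<open>
  The system \<open>G x \<le> v\<close> is solvable iff \<open>v\<close> lies in \<open>F + P\<close>, and since \<open>v\<^sub>F \<in> F\<close> this
  means that \<open>\<upsilon> + z \<in> P\<close> for some \<open>z \<in> F\<close>. Such a point lies in \<open>C\<^sub>e\<close> (take \<open>t = 1\<close>) and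
  is nonzero because \<open>\<upsilon> \<notin> F\<close>. Conversely, a nonzero point \<open>t \<upsilon> + z\<close> of \<open>C\<^sub>e \<inter> P\<close> has
  \<open>t > 0\<close> by strict tangency, and dividing by \<open>t\<close> gives \<open>\<upsilon> + z / t \<in> P\<close>.
\<close>

lemma nonneg_orthant_scaleR:
  assumes "0 \<le> c" and "y \<in> nonneg_orthant"
  shows "c *\<^sub>R y \<in> nonneg_orthant"
  using assms by (simp add: nonneg_orthant_def)

lemma feasible_set_nonempty_iff:
  "feasible_set G v \<noteq> {} \<longleftrightarrow> (\<exists>z \<in> range ((*v) G). v + z \<in> nonneg_orthant)"
proof
  assume "feasible_set G v \<noteq> {}"
  then obtain x where "\<forall>i. (G *v x) $ i \<le> v $ i"
    by (auto simp: feasible_set_def)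
  then have "v + G *v (- x) \<in> nonneg_orthant"
    by (simp add: nonneg_orthant_def vec.neg)
  then show "\<exists>z \<in> range ((*v) G). v + z \<in> nonneg_orthant"
    by blast
next
  assume "\<exists>z \<in> range ((*v) G). v + z \<in> nonneg_orthant"
  then obtain x where "v + G *v x \<in> nonneg_orthant"
    by blast
  then have "- x \<in> feasible_set G v"
    by (simp add: nonneg_orthant_def feasible_set_def vec.neg) (smt (verit))
  then show "feasible_set G v \<noteq> {}"
    by blast
qed

lemma ex_translate_in_subspace_iff:
  assumes "subspace F" and "w \<in> F"
  shows "(\<exists>z \<in> F. w + u + z \<in> S) \<longleftrightarrow> (\<exists>z \<in> F. u + z \<in> S)"
proof
  assume "\<exists>z \<in> F. w + u + z \<in> S"
  then obtain z where "z \<in> F" "u + (w + z) \<in> S"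
    by (auto simp: algebra_simps)
  then show "\<exists>z \<in> F. u + z \<in> S"
    using assms subspace_add by blast
next
  assume "\<exists>z \<in> F. u + z \<in> S"
  then obtain z where "z \<in> F" "w + u + (z - w) \<in> S"
    by auto
  then show "\<exists>z \<in> F. w + u + z \<in> S"
    using assms subspace_diff by blast
qed

lemma cone_e_inter_nonneg_orthant_nontrivial_iff:
  assumes F: "subspace F" and "u \<notin> F"
    and tangent: "F \<inter> nonneg_orthant = {0}"
  shows "cone_e u F \<inter> nonneg_orthant \<noteq> {0} \<longleftrightarrow> (\<exists>z \<in> F. u + z \<in> nonneg_orthant)"
proof
  assume "cone_e u F \<inter> nonneg_orthant \<noteq> {0}"
  moreover have "0 \<in> cone_e u F"
    using subspace_0 [OF F] by (force simp: cone_e_def)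
  moreover have "0 \<in> nonneg_orthant"
    by (simp add: nonneg_orthant_def)
  ultimately obtain y where "y \<in> cone_e u F" "y \<in> nonneg_orthant" "y \<noteq> 0"
    by blast
  then obtain t z where tz: "0 \<le> t" "z \<in> F"
    and in_P: "t *\<^sub>R u + z \<in> nonneg_orthant" and nonzero: "t *\<^sub>R u + z \<noteq> 0"
    by (auto simp: cone_e_def)
  have "t \<noteq> 0"
  proof
    assume "t = 0"
    then have "z \<in> F \<inter> nonneg_orthant"
      using tz(2) in_P by simp
    then show False
      using tangent nonzero \<open>t = 0\<close> by simp
  qed
  with tz have "t > 0"
    by simp
  then have "u + (1 / t) *\<^sub>R z = (1 / t) *\<^sub>R (t *\<^sub>R u + z)"
    by (simp add: scaleR_add_right)
  also have "\<dots> \<in> nonneg_orthant"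
    using \<open>t > 0\<close> in_P by (simp add: nonneg_orthant_scaleR)
  finally show "\<exists>z \<in> F. u + z \<in> nonneg_orthant"
    using F tz(2) subspace_scale by blast
next
  assume "\<exists>z \<in> F. u + z \<in> nonneg_orthant"
  then obtain z where z: "z \<in> F" "u + z \<in> nonneg_orthant"
    by blast
  have "u + z \<in> cone_e u F"
    using z(1) unfolding cone_e_def
    by (metis (mono_tags, lifting) mem_Collect_eq scaleR_one zero_le_one)
  moreover have "u + z \<noteq> 0"
  proof
    assume "u + z = 0"
    then have "u = - z"
      by (simp add: add_eq_0_iff)
    then show False
      using \<open>u \<notin> F\<close> z(1) subspace_neg [OF F] by simp
  qed
  ultimately show "cone_e u F \<inter> nonneg_orthant \<noteq> {0}"
    using z(2) by blast
qed

theorem mainTheorem1: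
  fixes G :: "real ^ 'm ^ 'n" and v vF u :: "real ^ 'n"
  assumes "vF \<in> range (\<lambda>x. G *v x)"
    and "u \<in> orthogonal_comp (range (\<lambda>x. G *v x))"
    and "v = vF + u"
    and "u \<noteq> 0"
    and "range (\<lambda>x. G *v x) \<inter> nonneg_orthant = {0}"
  shows "feasible_set G v \<noteq> {} \<longleftrightarrow>
         cone_e u (range (\<lambda>x. G *v x)) \<inter> nonneg_orthant \<noteq> {0}"
proof -
  let ?F = "range (\<lambda>x. G *v x)"
  have F: "subspace ?F"
    by (simp add: linear_subspace_image)
  have "u \<notin> ?F"
    using orthogonal_Int_0 [OF F] assms(2,4) by blast
  have "feasible_set G v \<noteq> {} \<longleftrightarrow> (\<exists>z \<in> ?F. vF + u + z \<in> nonneg_orthant)"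
    using assms(3) by (simp add: feasible_set_nonempty_iff)
  also have "\<dots> \<longleftrightarrow> (\<exists>z \<in> ?F. u + z \<in> nonneg_orthant)"
    using F assms(1) by (rule ex_translate_in_subspace_iff)
  also have "\<dots> \<longleftrightarrow> cone_e u ?F \<inter> nonneg_orthant \<noteq> {0}"
    using cone_e_inter_nonneg_orthant_nontrivial_iff [OF F \<open>u \<notin> ?F\<close> assms(5)] by blast
  finally show ?thesis .
qed

end
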